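(* Let $a,b$ be positive integers with $3\mid a+1$ and $3\mid b+1$. If the Aztec rectangle $\mathcal{AR}_{a,b}$ has a cover by L-trominoes, then $\mathcal{AR}_{a+4,b+4}$ has a cover by L-trominoes.
   Context: A cell is a unit square $[i,i+1]\times[j,j+1]$ with $i,j\in\mathbb{Z}$, labelled $(i,j)$. An L-tromino is a set of three cells equal to a $2\times 2$ block of cells with one cell removed. A cover of a region $R$ (a finite edge-connected set of cells) is a set of pairwise disjoint L-trominoes contained in $R$ whose union is $R$. For positive integers $a,b$, the Aztec rectangle $\mathcal{AR}_{a,b}$ is (up to translation) the region consisting of the cells $(i,j)\in\mathbb{Z}^2$ with $0\le i+j\le 2b$ and $1\le j-i\le 2a+1$; it has $a$ cells along its southwestern side and $b$ cells along its northwestern side. *)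

theory Defs
  imports Main
begin

type_synonym cell = "int \<times> int"

definition block2 :: "int \<Rightarrow> int \<Rightarrow> cell set" where
  "block2 i j = {(i, j), (i + 1, j), (i, j + 1), (i + 1, j + 1)}"

definition is_L_tromino :: "cell set \<Rightarrow> bool" where
  "is_L_tromino T \<longleftrightarrow> (\<exists>i j c. c \<in> block2 i j \<and> T = block2 i j - {c})"

definition is_cover :: "cell set set \<Rightarrow> cell set \<Rightarrow> bool" where
  "is_cover C R \<longleftrightarrow>
     (\<forall>T\<in>C. is_L_tromino T \<and> T \<subseteq> R) \<and>
     (\<forall>T\<in>C. \<forall>T'\<in>C. T \<noteq> T' \<longrightarrow> T \<inter> T' = {}) \<and>
     \<Union>C = R"

definition has_cover :: "cell set \<Rightarrow> bool" where
  "has_cover R \<longleftrightarrow> (\<exists>C. is_cover C R)"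

definition aztec_rectangle :: "nat \<Rightarrow> nat \<Rightarrow> cell set" where
  "aztec_rectangle a b =
     {(i, j). 0 \<le> i + j \<and> i + j \<le> 2 * int b \<and> 1 \<le> j - i \<and> j - i \<le> 2 * int a + 1}"

end

theory Submission
  imports Defs
begin

text \<open>
  Write \<open>a = 3p + 2\<close> and \<open>b = 3q + 2\<close>. In the diagonal coordinates \<open>s = i + j\<close>,
  \<open>d = j - i\<close> the Aztec rectangle is a box, and the cells of \<open>AR(a+4, b+4)\<close> outside
  \<open>AR(a, b)\<close> form a band of \<open>8 \<times> 6p\<close> cells along the north-east side, a band of
  \<open>6q \<times> 8\<close> cells along the north-west side, and a \<open>13 \<times> 13\<close> corner box with a
  \<open>5 \<times> 5\<close> box removed. The bands are tiled by translated copies of explicitly covered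
  \<open>8 \<times> 6\<close> and \<open>6 \<times> 8\<close> boxes; the corner is covered explicitly.
\<close>

definition diag_box :: "int \<Rightarrow> int \<Rightarrow> int \<Rightarrow> int \<Rightarrow> cell set" where
  "diag_box s0 s1 d0 d1 = {(i, j). s0 \<le> i + j \<and> i + j \<le> s1 \<and> d0 \<le> j - i \<and> j - i \<le> d1}"

lemma diag_box_empty: "s1 < s0 \<or> d1 < d0 \<Longrightarrow> diag_box s0 s1 d0 d1 = {}"
  unfolding diag_box_def by auto

definition translate :: "int \<Rightarrow> int \<Rightarrow> cell set \<Rightarrow> cell set" where
  "translate u v R = (\<lambda>(i, j). (i + u, j + v)) ` R"

lemma mem_translate [simp]: "(x, y) \<in> translate u v R \<longleftrightarrow> (x - u, y - v) \<in> R"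
  unfolding translate_def by force

lemma translate_diag_box:
  "translate u v (diag_box s0 s1 d0 d1) = diag_box (s0 + u + v) (s1 + u + v) (d0 + v - u) (d1 + v - u)"
  unfolding diag_box_def by auto

lemma translate_block2: "translate u v (block2 i j) = block2 (i + u) (j + v)"
  unfolding block2_def by auto

lemma translate_inverse: "translate (- u) (- v) (translate u v A) = A"
  by (simp add: set_eq_iff split_paired_All)

lemma translate_diff: "translate u v (A - B) = translate u v A - translate u v B"
  unfolding translate_def by auto

lemma translate_inter: "translate u v (A \<inter> B) = translate u v A \<inter> translate u v B"
  unfolding translate_def by auto

lemma translate_mono: "A \<subseteq> B \<Longrightarrow> translate u v A \<subseteq> translate u v B"
  unfolding translate_def by auto

lemma is_L_tromino_translate:
  assumes "is_L_tromino T"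
  shows "is_L_tromino (translate u v T)"
proof -
  obtain i j x y where c: "(x, y) \<in> block2 i j" and T: "T = block2 i j - {(x, y)}"
    using assms unfolding is_L_tromino_def by auto
  have "translate u v T = block2 (i + u) (j + v) - {(x + u, y + v)}"
    unfolding T translate_diff translate_block2 by (simp add: translate_def)
  moreover have "(x + u, y + v) \<in> block2 (i + u) (j + v)"
    using c unfolding block2_def by auto
  ultimately show ?thesis
    unfolding is_L_tromino_def by blast
qed

lemma has_cover_empty: "has_cover {}"
  unfolding has_cover_def is_cover_def by auto

lemma has_cover_L_tromino: "is_L_tromino T \<Longrightarrow> has_cover T"
  unfolding has_cover_def is_cover_def by (intro exI[of _ "{T}"]) auto

lemma has_cover_Un:
  assumes "has_cover A" "has_cover B" "A \<inter> B = {}"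
  shows "has_cover (A \<union> B)"
proof -
  obtain CA CB where "is_cover CA A" "is_cover CB B"
    using assms(1,2) unfolding has_cover_def by blast
  with assms(3) have "is_cover (CA \<union> CB) (A \<union> B)"
    unfolding is_cover_def by (auto 0 4)
  then show ?thesis
    unfolding has_cover_def by blast
qed

lemma has_cover_Un_L_tromino:
  "has_cover R \<Longrightarrow> is_L_tromino T \<Longrightarrow> R \<inter> T = {} \<Longrightarrow> has_cover (R \<union> T)"
  by (simp add: has_cover_L_tromino has_cover_Un)

lemma has_cover_translate:
  assumes "has_cover R"
  shows "has_cover (translate u v R)"
proof -
  obtain C where C: "is_cover C R"
    using assms unfolding has_cover_def by blast
  have "inj (translate u v)"
    by (rule inj_on_inverseI[of _ "translate (- u) (- v)"]) (auto simp: translate_inverse)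
  with C have "is_cover (translate u v ` C) (translate u v R)"
    unfolding is_cover_def
    by (auto simp: is_L_tromino_translate translate_mono inj_eq simp flip: translate_inter)
  then show ?thesis
    unfolding has_cover_def by blast
qed

text \<open>A translation by \<open>(u, v)\<close> moves \<open>s\<close> by \<open>u + v\<close> and \<open>d\<close> by \<open>v - u\<close>, which have
  equal parity; hence boxes are stacked with an even period \<open>2m\<close>.\<close>

lemma has_cover_diag_box_repeat_diff:
  fixes m n :: nat
  assumes tile: "has_cover (diag_box s0 s1 d0 (d0 + 2 * int m - 1))"
  shows "has_cover (diag_box s0 s1 d0 (d0 + 2 * int m * int n - 1))"
proof (induction n)
  case 0
  show ?case by (simp add: diag_box_empty has_cover_empty)
next
  case (Suc n)
  define k where "k = int m * int n"
  have IH: "has_cover (diag_box s0 s1 d0 (d0 + 2 * k - 1))"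
    using Suc.IH unfolding k_def by (simp add: mult.assoc)
  have "d0 + 2 * int m * int (Suc n) - 1 = d0 + 2 * k + 2 * int m - 1"
    unfolding k_def by (simp add: algebra_simps)
  moreover have "0 \<le> k"
    unfolding k_def by simp
  ultimately have split: "diag_box s0 s1 d0 (d0 + 2 * int m * int (Suc n) - 1)
      = diag_box s0 s1 d0 (d0 + 2 * k - 1) \<union> translate (- k) k (diag_box s0 s1 d0 (d0 + 2 * int m - 1))"
    unfolding translate_diag_box diag_box_def by auto
  have "diag_box s0 s1 d0 (d0 + 2 * k - 1) \<inter> translate (- k) k (diag_box s0 s1 d0 (d0 + 2 * int m - 1)) = {}"
    unfolding translate_diag_box diag_box_def by auto
  then show ?case
    unfolding split by (intro has_cover_Un IH has_cover_translate tile)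
qed

lemma has_cover_diag_box_repeat_sum:
  fixes m n :: nat
  assumes tile: "has_cover (diag_box s0 (s0 + 2 * int m - 1) d0 d1)"
  shows "has_cover (diag_box s0 (s0 + 2 * int m * int n - 1) d0 d1)"
proof (induction n)
  case 0
  show ?case by (simp add: diag_box_empty has_cover_empty)
next
  case (Suc n)
  define k where "k = int m * int n"
  have IH: "has_cover (diag_box s0 (s0 + 2 * k - 1) d0 d1)"
    using Suc.IH unfolding k_def by (simp add: mult.assoc)
  have "s0 + 2 * int m * int (Suc n) - 1 = s0 + 2 * k + 2 * int m - 1"
    unfolding k_def by (simp add: algebra_simps)
  moreover have "0 \<le> k"
    unfolding k_def by simp
  ultimately have split: "diag_box s0 (s0 + 2 * int m * int (Suc n) - 1) d0 d1
      = diag_box s0 (s0 + 2 * k - 1) d0 d1 \<union> translate k k (diag_box s0 (s0 + 2 * int m - 1) d0 d1)"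
    unfolding translate_diag_box diag_box_def by auto
  have "diag_box s0 (s0 + 2 * k - 1) d0 d1 \<inter> translate k k (diag_box s0 (s0 + 2 * int m - 1) d0 d1) = {}"
    unfolding translate_diag_box diag_box_def by auto
  then show ?case
    unfolding split by (intro has_cover_Un IH has_cover_translate tile)
qed

definition L_noSW :: "int \<Rightarrow> int \<Rightarrow> cell set" where "L_noSW i j = block2 i j - {(i, j)}"
definition L_noSE :: "int \<Rightarrow> int \<Rightarrow> cell set" where "L_noSE i j = block2 i j - {(i + 1, j)}"
definition L_noNW :: "int \<Rightarrow> int \<Rightarrow> cell set" where "L_noNW i j = block2 i j - {(i, j + 1)}"
definition L_noNE :: "int \<Rightarrow> int \<Rightarrow> cell set" where "L_noNE i j = block2 i j - {(i + 1, j + 1)}"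

lemma is_L_tromino_L_no:
  "is_L_tromino (L_noSW i j)" "is_L_tromino (L_noSE i j)"
  "is_L_tromino (L_noNW i j)" "is_L_tromino (L_noNE i j)"
  unfolding is_L_tromino_def L_noSW_def L_noSE_def L_noNW_def L_noNE_def block2_def by blast+

lemma L_no_cells:
  "L_noSW i j = {(i + 1, j), (i, j + 1), (i + 1, j + 1)}"
  "L_noSE i j = {(i, j), (i, j + 1), (i + 1, j + 1)}"
  "L_noNW i j = {(i, j), (i + 1, j), (i + 1, j + 1)}"
  "L_noNE i j = {(i, j), (i + 1, j), (i, j + 1)}"
  unfolding L_noSW_def L_noSE_def L_noNW_def L_noNE_def block2_def by auto

lemma diag_box_subset_square:
  "diag_box s0 s1 d0 d1 \<subseteq> {(s0 - d1) div 2..(s1 - d0) div 2} \<times> {(s0 + d0) div 2..(s1 + d1) div 2}"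
proof
  fix c assume c: "c \<in> diag_box s0 s1 d0 d1"
  obtain i j where ij: "c = (i, j)"
    by fastforce
  have "s0 - d1 \<le> 2 * i" "2 * i \<le> s1 - d0" "s0 + d0 \<le> 2 * j" "2 * j \<le> s1 + d1"
    using c unfolding ij diag_box_def by auto
  then show "c \<in> {(s0 - d1) div 2..(s1 - d0) div 2} \<times> {(s0 + d0) div 2..(s1 + d1) div 2}"
    unfolding ij using zdiv_mono1[of "s0 - d1" "2 * i" 2] zdiv_mono1[of "2 * i" "s1 - d0" 2]
      zdiv_mono1[of "s0 + d0" "2 * j" 2] zdiv_mono1[of "2 * j" "s1 + d1" 2]
    by simp
qed

lemma set_eq_by_diag_box_enumeration:
  fixes A B :: "cell set"
  assumes "A \<subseteq> diag_box s0 s1 d0 d1"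
    and "set (filter (\<lambda>c. c \<in> A)
          (List.product [(s0 - d1) div 2..(s1 - d0) div 2] [(s0 + d0) div 2..(s1 + d1) div 2])) \<subseteq> B"
    and "B \<subseteq> A"
  shows "A = B"
  using assms diag_box_subset_square[of s0 s1 d0 d1] by auto

lemma has_cover_diag_box_8_by_6: "has_cover (diag_box 1 8 1 6)"
proof -
  have "diag_box 1 8 1 6 = {} \<union> L_noSW (-2) 2 \<union> L_noNW (-2) 4 \<union> L_noSE 0 1 \<union> L_noSE 0 3
      \<union> L_noNE 0 5 \<union> L_noNW 1 3 \<union> L_noNE 1 6 \<union> L_noSW 2 4"
    by (rule set_eq_by_diag_box_enumeration[OF subset_refl])
      (simp_all add: diag_box_def L_no_cells upto.simps)
  then show ?thesis
    by (simp only:) (intro has_cover_Un_L_tromino is_L_tromino_L_no has_cover_empty;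
        simp add: L_no_cells)
qed

lemma has_cover_diag_box_6_by_8: "has_cover (diag_box 0 5 2 9)"
proof -
  have "diag_box 0 5 2 9 = {} \<union> L_noSW (-4) 3 \<union> L_noNW (-4) 5 \<union> L_noSW (-2) 1 \<union> L_noNW (-2) 3
      \<union> L_noSE (-2) 4 \<union> L_noNE (-2) 6 \<union> L_noSE 0 2 \<union> L_noNE 0 4"
    by (rule set_eq_by_diag_box_enumeration[OF subset_refl])
      (simp_all add: diag_box_def L_no_cells upto.simps)
  then show ?thesis
    by (simp only:) (intro has_cover_Un_L_tromino is_L_tromino_L_no has_cover_empty;
        simp add: L_no_cells)
qed

lemma has_cover_diag_box_13_by_13_minus_5_by_5:
  "has_cover (diag_box 0 12 1 13 - diag_box 0 4 1 5)"
proof -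
  have "diag_box 0 12 1 13 - diag_box 0 4 1 5 = {} \<union> L_noSW (-6) 5 \<union> L_noNW (-6) 7
      \<union> L_noSW (-4) 3 \<union> L_noSE (-4) 5 \<union> L_noSE (-4) 7 \<union> L_noNW (-4) 9 \<union> L_noSW (-3) 4
      \<union> L_noSW (-3) 6 \<union> L_noSW (-2) 7 \<union> L_noSE (-2) 9 \<union> L_noNW (-2) 11 \<union> L_noSE (-1) 5
      \<union> L_noSW (-1) 8 \<union> L_noSW 0 4 \<union> L_noSW 0 6 \<union> L_noSW 0 9 \<union> L_noNE 0 11 \<union> L_noSW 1 7
      \<union> L_noSE 2 3 \<union> L_noSE 2 5 \<union> L_noNE 2 9 \<union> L_noNW 3 5 \<union> L_noSE 3 7 \<union> L_noSW 4 6"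
    by (rule set_eq_by_diag_box_enumeration[OF Diff_subset])
      (simp_all add: diag_box_def L_no_cells upto.simps)
  then show ?thesis
    by (simp only:) (intro has_cover_Un_L_tromino is_L_tromino_L_no has_cover_empty;
        simp add: L_no_cells)
qed

lemma has_cover_diag_box_8_by_6n: "has_cover (diag_box 1 8 1 (6 * int n))"
  using has_cover_diag_box_repeat_diff[of 1 8 1 3 n] has_cover_diag_box_8_by_6 by simp

lemma has_cover_diag_box_6n_by_8: "has_cover (diag_box 0 (6 * int n - 1) 2 9)"
  using has_cover_diag_box_repeat_sum[of 0 3 2 9 n] has_cover_diag_box_6_by_8 by simp

theorem lemma3:
  fixes a b :: nat
  assumes "0 < a" and "0 < b" and "3 dvd (a + 1)" and "3 dvd (b + 1)"
    and "has_cover (aztec_rectangle a b)"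
  shows "has_cover (aztec_rectangle (a + 4) (b + 4))"
proof -
  have "\<exists>p. a = 3 * p + 2" "\<exists>q. b = 3 * q + 2"
    using assms(1-4) by presburger+
  then obtain p q where a: "a = 3 * p + 2" and b: "b = 3 * q + 2"
    by blast
  define NE where "NE = translate (int b) (int b) (diag_box 1 8 1 (6 * int p))"
  define NW where "NW = translate (- int a) (int a) (diag_box 0 (6 * int q - 1) 2 9)"
  define corner where "corner = translate (int b - int a) (int a + int b - 4)
    (diag_box 0 12 1 13 - diag_box 0 4 1 5)"
  have covers: "has_cover NE" "has_cover NW" "has_cover corner"
    unfolding NE_def NW_def corner_def
    by (intro has_cover_translate has_cover_diag_box_8_by_6n has_cover_diag_box_6n_by_8
        has_cover_diag_box_13_by_13_minus_5_by_5)+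
  have "aztec_rectangle (a + 4) (b + 4) = aztec_rectangle a b \<union> (NE \<union> (NW \<union> corner))"
    and "aztec_rectangle a b \<inter> (NE \<union> (NW \<union> corner)) = {}"
    and "NE \<inter> (NW \<union> corner) = {}" and "NW \<inter> corner = {}"
    unfolding NE_def NW_def corner_def translate_diff translate_diag_box aztec_rectangle_def diag_box_def a b
    by auto
  then show ?thesis
    using assms(5) covers by (metis has_cover_Un)
qed

end
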